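(* For integers $i\ge0$, $j\ge0$ and real $k_1,k_2$, $$\sum_{r=j}^{i}\frac{1}{r!}\,b_{i,r,k_1}\,c_{r,j,k_2}=\binom{i}{j}(k_1-k_2)^{i-j}.$$
   Context: For integers $i\ge0$, $j\ge0$ and real $k$, $b_{i,j,k}=\sum_{r=0}^{j}\binom{j}{r}(-1)^{j-r}(r+k)^i$, with the convention $0^0=1$. The (signed) Stirling numbers of the first kind $s_{i,j}$ ($i,j\ge0$) are defined by $s_{0,0}=1$, $s_{0,j}=0$ for $j>0$, $s_{i,0}=0$ for $i>0$, and $s_{i+1,j}=s_{i,j-1}-i\,s_{i,j}$ for $i\ge0$, $j>0$. For integers $i,j\ge0$ and real $k$, $c_{i,j,k}=\sum_{r=j}^{i}\binom{r}{j}(-k)^{r-j}s_{i,r}$ (with $0^0=1$). An empty sum (when $i<j$) equals $0$, as does $\binom{i}{j}$ for $i<j$. *)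

theory Defs
  imports "HOL-Analysis.Analysis"
begin

text \<open>b_{i,j,k} = sum_{r=0}^{j} binom(j,r) (-1)^(j-r) (r+k)^i, with 0^0 = 1 (as for HOL's power).\<close>
definition b_coef :: "nat \<Rightarrow> nat \<Rightarrow> real \<Rightarrow> real" where
  "b_coef i j k = (\<Sum>r=0..j. real (j choose r) * (-1) ^ (j - r) * (real r + k) ^ i)"

fun stirling1s :: "nat \<Rightarrow> nat \<Rightarrow> int" where
  "stirling1s 0 0 = 1"
| "stirling1s 0 (Suc j) = 0"
| "stirling1s (Suc i) 0 = 0"
| "stirling1s (Suc i) (Suc j) = stirling1s i j - int i * stirling1s i (Suc j)"

definition c_coef :: "nat \<Rightarrow> nat \<Rightarrow> real \<Rightarrow> real" where
  "c_coef i j k = (\<Sum>r=j..i. real (r choose j) * (-k) ^ (r - j) * real_of_int (stirling1s i r))"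

end

theory Submission
  imports Defs "HOL-Combinatorics.Stirling"
begin

text \<open>
  The numbers b(i,r,k) are the forward differences of x \<mapsto> (x + k)^i at 0, so Newton's
  forward difference formula reads (n + k)^i = \<Sum>r. b(i,r,k) n(n-1)...(n-r+1) / r!, where
  the terms with r > i vanish because the r-th difference of a polynomial of degree i < r
  is 0. The signed Stirling numbers are the coefficients of the falling factorial, so
  \<Sum>j. c(r,j,k) y^j = (y-k)(y-k-1)...(y-k-r+1). Together, the polynomial in y whose
  coefficients are the left-hand sides of the theorem agrees with (y + k1 - k2)^i at the
  infinitely many points y = k2 + n, hence has the same coefficients.
\<close>

lemma sum_atMost_atLeastAtMost_swap:
  "(\<Sum>j\<le>(n::nat). \<Sum>r=j..n. f j r) = (\<Sum>r\<le>n. \<Sum>j\<le>r. f j r :: 'a::comm_monoid_add)"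
proof -
  have "(\<Sum>j\<le>n. \<Sum>r=j..n. f j r) = (\<Sum>j\<le>n. \<Sum>r\<in>{r\<in>{..n}. j \<le> r}. f j r)"
    by (intro sum.cong) auto
  also have "\<dots> = (\<Sum>r\<le>n. \<Sum>j\<in>{j\<in>{..n}. j \<le> r}. f j r)"
    by (rule sum.swap_restrict) auto
  also have "\<dots> = (\<Sum>r\<le>n. \<Sum>j\<le>r. f j r)"
    by (intro sum.cong) auto
  finally show ?thesis .
qed

lemma polyfun_coeffs_eq_if_eq_on_infinite:
  fixes a b :: "nat \<Rightarrow> 'a::{comm_ring,real_normed_div_algebra}"
  assumes "infinite S"
    and "\<And>y. y \<in> S \<Longrightarrow> (\<Sum>l\<le>n. a l * y ^ l) = (\<Sum>l\<le>n. b l * y ^ l)"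
    and "j \<le> n"
  shows "a j = b j"
proof -
  have "S \<subseteq> {y. (\<Sum>l\<le>n. (a l - b l) * y ^ l) = 0}"
    using assms(2) by (auto simp: left_diff_distrib sum_subtractf)
  then have "infinite {y. (\<Sum>l\<le>n. (a l - b l) * y ^ l) = 0}"
    using assms(1) finite_subset by blast
  then show ?thesis
    using assms(3) polyfun_finite_roots by fastforce
qed

lemma stirling1s_eq_signed_stirling:
  "stirling1s i j = (-1) ^ (i - j) * int (stirling i j)"
proof (induction i arbitrary: j)
  case 0
  then show ?case by (cases j) auto
next
  case (Suc i)
  then show ?case
  proof (cases j)
    case (Suc j')
    show ?thesis
    proof (cases "j' < i")
      case True
      then have "Suc i - Suc j' = Suc (i - Suc j')" and "i - j' = Suc (i - Suc j')"
        by simp_all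
      then show ?thesis using Suc.IH Suc by (simp add: algebra_simps)
    qed (use Suc.IH Suc in auto)
  qed simp
qed

lemma sum_stirling1s_power:
  "(\<Sum>m\<le>r. of_int (stirling1s r m) * z ^ m) = (\<Prod>t<r. z - of_nat t :: 'a::comm_ring_1)"
proof -
  have "(\<Sum>m\<le>r. of_int (stirling1s r m) * z ^ m)
      = (-1) ^ r * (\<Sum>m\<le>r. of_nat (stirling r m) * (- z) ^ m)"
    unfolding sum_distrib_left
  proof (rule sum.cong[OF refl])
    fix m assume "m \<in> {..r}"
    then obtain d where "r = m + d"
      using le_Suc_ex by fastforce
    then have sign: "(-1) ^ r * (- z) ^ m = (-1) ^ (r - m) * z ^ m"
      by (simp add: power_add power_minus[of z] algebra_simps)
    show "of_int (stirling1s r m) * z ^ m = (-1) ^ r * (of_nat (stirling r m) * (- z) ^ m)"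
      by (simp add: stirling1s_eq_signed_stirling mult.left_commute[of "(-1) ^ r"] sign)
  qed
  also have "\<dots> = (-1) ^ r * (\<Prod>t<r. of_nat t - z)"
    by (simp add: stirling_pochhammer pochhammer_prod atLeast0LessThan)
  also have "\<dots> = (\<Prod>t<r. z - of_nat t)"
    by (induction r) (simp_all add: algebra_simps)
  finally show ?thesis .
qed

lemma sum_c_coef_power: "(\<Sum>j\<le>r. c_coef r j k * y ^ j) = (\<Prod>t<r. y - k - real t)"
proof -
  have "(\<Sum>j\<le>r. c_coef r j k * y ^ j)
      = (\<Sum>j\<le>r. \<Sum>m=j..r. real (m choose j) * (-k) ^ (m - j) * of_int (stirling1s r m) * y ^ j)"
    by (simp add: c_coef_def sum_distrib_right)
  also have "\<dots> = (\<Sum>m\<le>r. \<Sum>j\<le>m. real (m choose j) * (-k) ^ (m - j) * of_int (stirling1s r m) * y ^ j)"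
    by (rule sum_atMost_atLeastAtMost_swap)
  also have "\<dots> = (\<Sum>m\<le>r. of_int (stirling1s r m) * (\<Sum>j\<le>m. real (m choose j) * y ^ j * (-k) ^ (m - j)))"
    by (simp add: sum_distrib_left algebra_simps)
  also have "\<dots> = (\<Sum>m\<le>r. of_int (stirling1s r m) * (y - k) ^ m)"
    by (simp flip: binomial_ring)
  also have "\<dots> = (\<Prod>t<r. y - k - real t)"
    by (rule sum_stirling1s_power)
  finally show ?thesis .
qed

lemma b_coef_altdef: "b_coef i j k = (\<Sum>r\<le>j. real (j choose r) * (-1) ^ (j - r) * (real r + k) ^ i)"
  by (simp add: b_coef_def atLeast0AtMost)

lemma b_coef_0: "b_coef i 0 k = k ^ i"
  by (simp add: b_coef_altdef)

lemma b_coef_Suc: "b_coef i (Suc r) k = b_coef i r (k + 1) - b_coef i r k"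
proof -
  define g where "g t = (-1::real) ^ (Suc r - t) * (real t + k) ^ i" for t
  have "b_coef i (Suc r) k = (\<Sum>t\<le>Suc r. real (Suc r choose t) * g t)"
    by (simp add: b_coef_altdef g_def mult.assoc)
  also have "\<dots> = (g 0 + (\<Sum>u\<le>r. real (r choose Suc u) * g (Suc u)))
       + (\<Sum>u\<le>r. real (r choose u) * g (Suc u))"
    by (subst sum.atMost_Suc_shift) (simp add: sum.distrib algebra_simps)
  also have "g 0 + (\<Sum>u\<le>r. real (r choose Suc u) * g (Suc u)) = (\<Sum>t\<le>Suc r. real (r choose t) * g t)"
    by (subst sum.atMost_Suc_shift) simp
  also have "\<dots> = (\<Sum>t\<le>r. real (r choose t) * g t)"
    by simp
  also have "\<dots> = - b_coef i r k"
    unfolding b_coef_altdef sum_negf[symmetric]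
    by (rule sum.cong) (auto simp: g_def Suc_diff_le)
  also have "(\<Sum>u\<le>r. real (r choose u) * g (Suc u)) = b_coef i r (k + 1)"
    unfolding b_coef_altdef
    by (rule sum.cong) (auto simp: g_def algebra_simps)
  finally show ?thesis by simp
qed

lemma b_coef_Suc_Suc:
  "b_coef (Suc i) (Suc r) k = k * b_coef i (Suc r) k + real (Suc r) * b_coef i r (k + 1)"
proof -
  define g where "g t = (-1::real) ^ (Suc r - t) * (real t + k) ^ i" for t
  have absorb: "real (Suc u) * real (Suc r choose Suc u) = real (Suc r) * real (r choose u)" for u
    by (metis Suc_times_binomial of_nat_mult)
  have "b_coef (Suc i) (Suc r) k = k * (\<Sum>t\<le>Suc r. real (Suc r choose t) * g t)
     + (\<Sum>t\<le>Suc r. real t * real (Suc r choose t) * g t)"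
    by (simp add: b_coef_altdef g_def sum_distrib_left sum.distrib[symmetric] algebra_simps)
  also have "(\<Sum>t\<le>Suc r. real (Suc r choose t) * g t) = b_coef i (Suc r) k"
    by (simp add: b_coef_altdef g_def mult.assoc)
  also have "(\<Sum>t\<le>Suc r. real t * real (Suc r choose t) * g t)
      = (\<Sum>u\<le>r. real (Suc r) * (real (r choose u) * g (Suc u)))"
    by (simp only: sum.atMost_Suc_shift of_nat_0 mult_zero_left add_0 absorb
        flip: mult.assoc)
  also have "\<dots> = real (Suc r) * b_coef i r (k + 1)"
    unfolding b_coef_altdef sum_distrib_left
    by (rule sum.cong) (auto simp: g_def algebra_simps)
  finally show ?thesis .
qed

lemma b_coef_eq_0: "i < r \<Longrightarrow> b_coef i r k = 0"
proof (induction i arbitrary: r k)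
  case 0
  have "b_coef 0 r k = (\<Sum>t\<le>r. real (r choose t) * 1 ^ t * (-1) ^ (r - t))"
    by (simp add: b_coef_altdef)
  also have "\<dots> = (1 + -1) ^ r"
    by (rule binomial_ring[symmetric])
  finally show ?case using 0 by simp
next
  case (Suc i)
  then obtain q where "r = Suc q" by (cases r) auto
  then show ?case using Suc by (simp add: b_coef_Suc_Suc)
qed

lemma newton_forward_b_coef: "(\<Sum>r\<le>n. real (n choose r) * b_coef i r k) = (real n + k) ^ i"
proof (induction n arbitrary: k)
  case 0
  then show ?case by (simp add: b_coef_0)
next
  case (Suc n)
  have "(\<Sum>r\<le>Suc n. real (Suc n choose r) * b_coef i r k)
     = (b_coef i 0 k + (\<Sum>u\<le>n. real (n choose Suc u) * b_coef i (Suc u) k))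
       + (\<Sum>u\<le>n. real (n choose u) * b_coef i (Suc u) k)"
    by (subst sum.atMost_Suc_shift) (simp add: sum.distrib algebra_simps)
  also have "b_coef i 0 k + (\<Sum>u\<le>n. real (n choose Suc u) * b_coef i (Suc u) k)
      = (\<Sum>r\<le>Suc n. real (n choose r) * b_coef i r k)"
    by (subst sum.atMost_Suc_shift) simp
  also have "\<dots> = (\<Sum>r\<le>n. real (n choose r) * b_coef i r k)"
    by simp
  finally have "(\<Sum>r\<le>Suc n. real (Suc n choose r) * b_coef i r k)
     = (\<Sum>r\<le>n. real (n choose r) * (b_coef i r k + b_coef i (Suc r) k))"
    by (simp add: sum.distrib algebra_simps)
  also have "\<dots> = (\<Sum>r\<le>n. real (n choose r) * b_coef i r (k + 1))"
    by (simp add: b_coef_Suc)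
  also have "\<dots> = (real (Suc n) + k) ^ i"
    by (simp add: Suc.IH algebra_simps)
  finally show ?case .
qed

lemma sum_b_coef_falling_factorial:
  "(\<Sum>r\<le>i. b_coef i r k / fact r * (\<Prod>t<r. real n - real t)) = (real n + k) ^ i"
proof -
  have "(\<Sum>r\<le>i. b_coef i r k / fact r * (\<Prod>t<r. real n - real t))
      = (\<Sum>r\<le>i. real (n choose r) * b_coef i r k)"
    by (simp add: binomial_gbinomial gbinomial_prod_rev atLeast0LessThan mult.commute)
  also have "\<dots> = (\<Sum>r\<le>i + n. real (n choose r) * b_coef i r k)"
    by (rule sum.mono_neutral_left) (auto simp: b_coef_eq_0)
  also have "\<dots> = (\<Sum>r\<le>n. real (n choose r) * b_coef i r k)"
    by (rule sum.mono_neutral_right) auto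
  finally show ?thesis by (simp add: newton_forward_b_coef)
qed

lemma sum_b_coef_c_coef_power:
  "(\<Sum>j\<le>i. (\<Sum>r=j..i. (1 / fact r) * b_coef i r k1 * c_coef r j k2) * (k2 + real n) ^ j)
     = (real n + k1) ^ i"
proof -
  have "(\<Sum>j\<le>i. (\<Sum>r=j..i. (1 / fact r) * b_coef i r k1 * c_coef r j k2) * (k2 + real n) ^ j)
      = (\<Sum>r\<le>i. \<Sum>j\<le>r. (1 / fact r) * b_coef i r k1 * (c_coef r j k2 * (k2 + real n) ^ j))"
    by (simp add: sum_distrib_right mult.assoc sum_atMost_atLeastAtMost_swap)
  also have "\<dots> = (\<Sum>r\<le>i. (1 / fact r) * b_coef i r k1 * (\<Prod>t<r. k2 + real n - k2 - real t))"
    by (simp only: sum_c_coef_power flip: sum_distrib_left)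
  also have "\<dots> = (\<Sum>r\<le>i. b_coef i r k1 / fact r * (\<Prod>t<r. real n - real t))"
    by simp
  finally show ?thesis by (simp only: sum_b_coef_falling_factorial)
qed

theorem mainTheorem17:
  fixes i j :: nat and k1 k2 :: real
  shows "(\<Sum>r=j..i. (1 / fact r) * b_coef i r k1 * c_coef r j k2)
           = real (i choose j) * (k1 - k2) ^ (i - j)"
proof (cases "j \<le> i")
  case True
  have "infinite (range (\<lambda>n. k2 + real n))"
    by (rule range_inj_infinite) (auto simp: inj_on_def)
  then show ?thesis
  proof (rule polyfun_coeffs_eq_if_eq_on_infinite[OF _ _ True])
    fix y assume "y \<in> range (\<lambda>n. k2 + real n)"
    then obtain n where y: "y = k2 + real n" by auto
    have "(\<Sum>l\<le>i. (\<Sum>r=l..i. (1 / fact r) * b_coef i r k1 * c_coef r l k2) * y ^ l)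
        = (real n + k1) ^ i"
      unfolding y by (rule sum_b_coef_c_coef_power)
    also have "\<dots> = (y + (k1 - k2)) ^ i"
      by (simp add: y)
    also have "\<dots> = (\<Sum>l\<le>i. real (i choose l) * (k1 - k2) ^ (i - l) * y ^ l)"
      by (simp add: binomial_ring mult_ac)
    finally show "(\<Sum>l\<le>i. (\<Sum>r=l..i. (1 / fact r) * b_coef i r k1 * c_coef r l k2) * y ^ l)
        = (\<Sum>l\<le>i. real (i choose l) * (k1 - k2) ^ (i - l) * y ^ l)" .
  qed
qed simp

end
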